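(* Consider the Markov process on $\{0,1\}^{\{1,2,3,\dots\}}$ described in the context. It has a stationary distribution under which, for every $i\ge1$, $$P(A_i=1)=\frac{\lambda_a}{\lambda}\Bigl(\frac{\lambda}{\lambda+\delta}\Bigr)^i,\qquad P(A_i=1,A_{i+1}=1)=\frac{\lambda_a^2}{\lambda(\lambda+\delta)}\Bigl(\frac{\lambda}{\lambda+2\delta}\Bigr)^i,$$ and these are the limits as $t\to\infty$ of $P_t(A_i=1)$ and $P_t(A_i=1,A_{i+1}=1)$ from any initial distribution.
   Context: Parameters $\lambda_a,\lambda_b>0$, $\delta>0$, $\lambda=\lambda_a+\lambda_b$. A configuration is a sequence $(A_1,A_2,\dots)\in\{0,1\}^{\{1,2,\dots\}}$ ($A_i=1$: fast vehicle, $A_i=0$: slow vehicle, index $1$ being the most recently arrived). Dynamics in continuous time: at rate $\lambda_a$ an arrival occurs, whereupon the sequence is shifted ($A_{i+1}\leftarrow A_i$ for all $i\ge1$) and $A_1$ is set to $1$; at rate $\lambda_b$ the same shift occurs and $A_1$ is set to $0$; independently, each site $i$ with $A_i=1$ switches to $A_i=0$ at rate $\delta$. *)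

theory Defs
  imports "HOL-Probability.Probability"
begin

text \<open>Configurations: site k (0-based) of a config A :: nat \<Rightarrow> bool corresponds to the
  paper's site i = k+1; True = fast vehicle (A_i = 1), False = slow vehicle.\<close>

type_synonym config = "nat \<Rightarrow> bool"

definition config_space :: "config measure" where
  "config_space = PiM UNIV (\<lambda>_. count_space UNIV)"

text \<open>Arrival of a vehicle of type b: shift every site by one and put b at the first site.\<close>
definition push :: "bool \<Rightarrow> config \<Rightarrow> config" where
  "push b A = (\<lambda>i. if i = 0 then b else A (i - 1))"

definition cylinder :: "(config \<Rightarrow> real) \<Rightarrow> bool" where
  "cylinder f \<longleftrightarrow> (\<exists>n. \<forall>A B. (\<forall>i<n. A i = B i) \<longrightarrow> f A = f B)"

text \<open>Generator of the process applied to a cylinder function. For cylinder f only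
  finitely many sites contribute to the flip sum.\<close>
definition gen :: "real \<Rightarrow> real \<Rightarrow> real \<Rightarrow> (config \<Rightarrow> real) \<Rightarrow> config \<Rightarrow> real" where
  "gen la lb d f A =
     la * (f (push True A) - f A) + lb * (f (push False A) - f A)
     + d * (\<Sum>i\<in>{i. A i \<and> f (A(i := False)) \<noteq> f A}. f (A(i := False)) - f A)"

text \<open>A family of laws (mu t)_{t \<ge> 0} of the process: probability measures on the
  configuration space evolving by the Kolmogorov forward equation
  d/dt E_t[f] = E_t[L f] for every cylinder function f.\<close>
definition law_evolution :: "real \<Rightarrow> real \<Rightarrow> real \<Rightarrow> (real \<Rightarrow> config measure) \<Rightarrow> bool" where
  "law_evolution la lb d \<mu> \<longleftrightarrow>
     (\<forall>t\<ge>0. prob_space (\<mu> t) \<and> sets (\<mu> t) = sets config_space) \<and>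
     (\<forall>f. cylinder f \<longrightarrow>
        (\<forall>t\<ge>0. ((\<lambda>s. integral\<^sup>L (\<mu> s) f) has_real_derivative integral\<^sup>L (\<mu> t) (gen la lb d f))
                  (at t within {0..})))"

definition stationary :: "real \<Rightarrow> real \<Rightarrow> real \<Rightarrow> config measure \<Rightarrow> bool" where
  "stationary la lb d \<mu> \<longleftrightarrow> law_evolution la lb d (\<lambda>_. \<mu>)"

end

theory Submission
  imports Defs "HOL-Real_Asymp.Real_Asymp"
begin

text \<open>
  Both parts of the theorem rest on one algebraic fact: the generator maps the monomial
  \<open>\<Prod>\<^sub>i\<^sub>\<in>\<^sub>S A\<^sub>i\<close> to a combination of itself and of the monomial of the shifted set
  (\<open>trunc_gen_monomial\<close>). Hence the expectations of monomials obey a closed, triangular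
  system of linear differential equations.

  For any law evolution, the occupation probability of site \<open>0\<close>, and then of
  site \<open>j + 1\<close> given that of site \<open>j\<close>, solves a linear relaxation equation \<open>y' = g - c y\<close>
  whose forcing converges; an elementary comparison argument (\<open>ode_limit\<close>) yields the limits.
  The same cascade handles adjacent pairs.

  An explicit law is built from i.i.d. uniform noise (\<open>sample\<close>), its moments
  are computed in closed form (\<open>moment_formula\<close>) and shown to satisfy the stationary
  equations; since every cylinder function is a linear combination of monomials
  (\<open>local_in_monomial_span\<close>), the generator of every cylinder function has mean zero.

  The marginals of the stationary law are then the limits of the constant evolution.
\<close>

definition monomial :: "nat set \<Rightarrow> config \<Rightarrow> real" where
  "monomial S A = of_bool (\<forall>i\<in>S. A i)"

text \<open>Sites of \<open>S\<close> seen from one position further back; an arrival moves site \<open>j\<close> to \<open>j + 1\<close>.\<close>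
definition shift_set :: "nat set \<Rightarrow> nat set" where
  "shift_set S = {j. Suc j \<in> S}"

definition local_to :: "nat \<Rightarrow> (config \<Rightarrow> real) \<Rightarrow> bool" where
  "local_to n f \<longleftrightarrow> (\<forall>A B. (\<forall>i<n. A i = B i) \<longrightarrow> f A = f B)"

text \<open>The generator with the flip sum restricted to the window \<open>{..<n}\<close>; unlike \<open>gen\<close> it is
  visibly linear in \<open>f\<close>, and it agrees with \<open>gen\<close> on functions local to the window.\<close>
definition trunc_gen :: "real \<Rightarrow> real \<Rightarrow> real \<Rightarrow> nat \<Rightarrow> (config \<Rightarrow> real) \<Rightarrow> config \<Rightarrow> real" where
  "trunc_gen la lb d n f A =
     la * (f (push True A) - f A) + lb * (f (push False A) - f A)
     + d * (\<Sum>i\<in>{i. i < n \<and> A i}. f (A(i := False)) - f A)"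

lemma cylinder_iff_local: "cylinder f \<longleftrightarrow> (\<exists>n. local_to n f)"
  unfolding cylinder_def local_to_def ..

text \<open>Flips outside the window do not change a local function, so they do not contribute to \<open>gen\<close>.\<close>
lemma gen_eq_trunc_gen:
  assumes "local_to n f"
  shows "gen la lb d f A = trunc_gen la lb d n f A"
proof -
  have "f (A(i := False)) = f A" if "i \<ge> n" for i
    using assms that unfolding local_to_def by (metis fun_upd_other leD)
  then have sub: "{i. A i \<and> f (A(i := False)) \<noteq> f A} \<subseteq> {i. i < n \<and> A i}"
    by (auto simp: not_less[symmetric])
  have "(\<Sum>i\<in>{i. A i \<and> f (A(i := False)) \<noteq> f A}. f (A(i := False)) - f A)
      = (\<Sum>i\<in>{i. i < n \<and> A i}. f (A(i := False)) - f A)"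
    by (rule sum.mono_neutral_left) (use sub in auto)
  then show ?thesis unfolding gen_def trunc_gen_def by simp
qed

lemma trunc_gen_add:
  "trunc_gen la lb d n (\<lambda>A. f A + g A) A = trunc_gen la lb d n f A + trunc_gen la lb d n g A"
  unfolding trunc_gen_def by (simp add: sum_subtractf sum.distrib algebra_simps)

lemma trunc_gen_scale: "trunc_gen la lb d n (\<lambda>A. c * f A) A = c * trunc_gen la lb d n f A"
  unfolding trunc_gen_def by (simp add: sum_distrib_left algebra_simps)

lemma local_to_monomial: "S \<subseteq> {..<n} \<Longrightarrow> local_to n (monomial S)"
  unfolding local_to_def monomial_def by auto

lemma monomial_push: "monomial S (push b A) = of_bool (0 \<in> S \<longrightarrow> b) * monomial (shift_set S) A"
proof -
  have "(\<forall>i\<in>S. push b A i) \<longleftrightarrow> (0 \<in> S \<longrightarrow> b) \<and> (\<forall>j\<in>shift_set S. A j)"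
    unfolding push_def shift_set_def by (auto simp: gr0_conv_Suc)
  then show ?thesis unfolding monomial_def by simp
qed

lemma shift_set_subset: "S \<subseteq> {..<Suc n} \<Longrightarrow> shift_set S \<subseteq> {..<n}"
  unfolding shift_set_def by auto

lemma finite_shift_set: "finite S \<Longrightarrow> finite (shift_set S)"
  unfolding shift_set_def using finite_vimageI[of S Suc] by (simp add: vimage_def)

lemma card_shift_set:
  assumes "finite S"
  shows "card S = card (shift_set S) + of_bool (0 \<in> S)"
proof -
  have "S - {0} = Suc ` shift_set S"
    unfolding shift_set_def by (auto simp: image_iff) (metis not0_implies_Suc)
  then have "card (S - {0}) = card (shift_set S)" by (simp add: card_image)
  moreover have "0 \<in> S \<Longrightarrow> card S > 0" using assms card_gt_0_iff by blast
  ultimately show ?thesis using assms by (cases "0 \<in> S") (auto simp: card_Diff_singleton)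
qed

text \<open>The generator maps monomials to monomials: a product over \<open>S\<close> is destroyed by any of the
  \<open>card S\<close> decays and by every arrival, and recreated by arrivals from the shifted product
  (only by fast arrivals if site \<open>0\<close> belongs to \<open>S\<close>).\<close>
lemma trunc_gen_monomial:
  assumes "S \<subseteq> {..<n}"
  shows "trunc_gen la lb d n (monomial S) A =
     (la + lb * of_bool (0 \<notin> S)) * monomial (shift_set S) A - (la + lb + d * card S) * monomial S A"
proof -
  have "(\<Sum>i\<in>{i. i < n \<and> A i}. monomial S (A(i := False)) - monomial S A)
      = - card S * monomial S A"
  proof (cases "\<forall>i\<in>S. A i")
    case True
    then have "{i. i < n \<and> A i} \<inter> S = S" using assms by auto
    moreover have "(\<Sum>i\<in>{i. i < n \<and> A i}. monomial S (A(i := False)) - monomial S A)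
        = (\<Sum>i\<in>{i. i < n \<and> A i}. if i \<in> S then -1 else 0)"
      by (rule sum.cong) (use True in \<open>auto simp: monomial_def\<close>)
    ultimately show ?thesis using True by (simp add: sum.If_cases monomial_def)
  qed (auto simp: monomial_def intro!: sum.neutral)
  then show ?thesis
    unfolding trunc_gen_def monomial_push by (simp add: algebra_simps)
qed

inductive_set monomial_span :: "nat \<Rightarrow> (config \<Rightarrow> real) set" for n where
  monomial: "S \<subseteq> {..<n} \<Longrightarrow> monomial S \<in> monomial_span n"
| add: "f \<in> monomial_span n \<Longrightarrow> g \<in> monomial_span n \<Longrightarrow> (\<lambda>A. f A + g A) \<in> monomial_span n"
| scale: "f \<in> monomial_span n \<Longrightarrow> (\<lambda>A. c * f A) \<in> monomial_span n"

lemma monomial_span_mono: "f \<in> monomial_span n \<Longrightarrow> n \<le> m \<Longrightarrow> f \<in> monomial_span m"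
proof (induction rule: monomial_span.induct)
  case (monomial S)
  then show ?case by (intro monomial_span.monomial) auto
qed (auto intro: monomial_span.intros)

lemma monomial_span_mult_site:
  assumes "f \<in> monomial_span n" "j < n"
  shows "(\<lambda>A. monomial {j} A * f A) \<in> monomial_span n"
  using assms(1)
proof induction
  case (monomial S)
  have "(\<lambda>A. monomial {j} A * monomial S A) = monomial (insert j S)"
    by (auto simp: monomial_def)
  then show ?case using monomial assms(2) by (auto intro!: monomial_span.monomial)
next
  case (add f g)
  then show ?case using monomial_span.add[OF add.IH] by (simp add: distrib_left)
next
  case (scale f c)
  then show ?case using monomial_span.scale[OF scale.IH, of c] by (simp add: mult.left_commute)
qed

text \<open>Every function of the first \<open>n\<close> sites is a linear combination of monomials (induction on \<open>n\<close>,
  interpolating linearly in the last site).\<close>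
lemma local_in_monomial_span: "local_to n f \<Longrightarrow> f \<in> monomial_span n"
proof (induction n arbitrary: f)
  case 0
  then have "f = (\<lambda>A. f (\<lambda>_. False) * monomial {} A)"
    by (auto simp: local_to_def monomial_def)
  then show ?case by (metis monomial_span.monomial monomial_span.scale empty_subsetI)
next
  case (Suc n)
  define f0 where "f0 A = f (A(n := False))" for A
  define f1 where "f1 A = f (A(n := True))" for A
  have "local_to n f0" "local_to n f1"
    using Suc.prems unfolding local_to_def f0_def f1_def by (auto simp: less_Suc_eq)
  then have f0: "f0 \<in> monomial_span (Suc n)" and f1: "f1 \<in> monomial_span (Suc n)"
    by (auto intro: monomial_span_mono[OF Suc.IH])
  have "(\<lambda>A. f0 A + monomial {n} A * (f1 A + (-1) * f0 A)) \<in> monomial_span (Suc n)"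
    by (intro monomial_span.add f0 monomial_span_mult_site monomial_span.scale f1) simp
  moreover have "(\<lambda>A. f0 A + monomial {n} A * (f1 A + (-1) * f0 A)) = f"
    by (auto simp: monomial_def f0_def f1_def fun_upd_idem)
  ultimately show ?case by simp
qed

lemma space_config_space [simp]: "space config_space = UNIV"
  by (simp add: config_space_def space_PiM)

lemma measurable_monomial [measurable]: "finite S \<Longrightarrow> monomial S \<in> borel_measurable config_space"
  unfolding monomial_def config_space_def by measurable

locale config_prob = prob_space \<nu> for \<nu> :: "config measure" +
  assumes sets_config: "sets \<nu> = sets config_space"
begin

lemma space_config [simp]: "space \<nu> = UNIV"
  using sets_eq_imp_space_eq[OF sets_config] by simp

lemma integrable_monomial [simp]: "finite S \<Longrightarrow> integrable \<nu> (monomial S)"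
  by (rule integrable_const_bound[where B=1])
     (auto simp: monomial_def measurable_cong_sets[OF sets_config refl])

lemma measure_eq_integral_monomial: "finite S \<Longrightarrow> measure \<nu> {A. \<forall>i\<in>S. A i} = integral\<^sup>L \<nu> (monomial S)"
proof -
  have "monomial S = indicator {A. \<forall>i\<in>S. A i}" by (auto simp: monomial_def fun_eq_iff)
  then show ?thesis by simp
qed

lemma integral_monomial_empty: "integral\<^sup>L \<nu> (monomial {}) = 1"
proof -
  have "monomial {} = (\<lambda>_. 1)" by (simp add: monomial_def fun_eq_iff)
  then show ?thesis using prob_space by simp
qed

lemma integral_gen_monomial:
  assumes "finite S"
  shows "integral\<^sup>L \<nu> (gen la lb d (monomial S)) =
     (la + lb * of_bool (0 \<notin> S)) * integral\<^sup>L \<nu> (monomial (shift_set S))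
     - (la + lb + d * card S) * integral\<^sup>L \<nu> (monomial S)"
proof -
  obtain n where S: "S \<subseteq> {..<n}"
    using assms finite_nat_bounded by blast
  have "gen la lb d (monomial S) = (\<lambda>A. (la + lb * of_bool (0 \<notin> S)) * monomial (shift_set S) A
      - (la + lb + d * card S) * monomial S A)"
    using gen_eq_trunc_gen[OF local_to_monomial[OF S]] trunc_gen_monomial[OF S] by auto
  then show ?thesis using assms finite_shift_set by simp
qed

end

text \<open>Comparison for the linear equation \<open>y' = g - c y\<close>: an upper bound \<open>e\<close> on the forcing \<open>g\<close> gives
  relaxation of \<open>y\<close> towards at most \<open>e / c\<close> (monotonicity of \<open>exp (c t) (y t - e / c)\<close>).\<close>
lemma ode_upper_bound:
  fixes y g :: "real \<Rightarrow> real" and c e T t :: real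
  assumes c: "c > 0"
    and der: "\<And>t. t \<ge> T \<Longrightarrow> (y has_real_derivative (g t - c * y t)) (at t)"
    and g: "\<And>t. t \<ge> T \<Longrightarrow> g t \<le> e"
    and t: "t \<ge> T"
  shows "y t \<le> exp (c * (T - t)) * (y T - e / c) + e / c"
proof -
  define w where "w t = exp (c * t) * (y t - e / c)" for t
  have dw: "(w has_real_derivative exp (c * t) * (g t - e)) (at t)" if "t \<ge> T" for t
  proof -
    have "(w has_real_derivative (exp (c * t) * c) * (y t - e / c) + exp (c * t) * (g t - c * y t)) (at t)"
      unfolding w_def by (auto intro!: derivative_eq_intros der that)
    moreover have "(exp (c * t) * c) * (y t - e / c) + exp (c * t) * (g t - c * y t) = exp (c * t) * (g t - e)"
      using c by (simp add: field_simps)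
    ultimately show ?thesis by simp
  qed
  have "w t \<le> w T"
    by (rule deriv_nonpos_imp_antimono[where g' = "\<lambda>t. exp (c * t) * (g t - e)"])
       (use dw g t in \<open>auto intro!: mult_nonneg_nonpos\<close>)
  then have "y t - e / c \<le> exp (c * T) * (y T - e / c) / exp (c * t)"
    by (simp add: w_def field_simps)
  also have "\<dots> = exp (c * (T - t)) * (y T - e / c)"
    by (simp add: right_diff_distrib exp_diff diff_divide_distrib)
  finally show ?thesis by simp
qed

lemma ode_deviation_bound:
  fixes y g :: "real \<Rightarrow> real" and c L \<eta> T t :: real
  assumes c: "c > 0"
    and der: "\<And>t. t \<ge> T \<Longrightarrow> (y has_real_derivative (g t - c * y t)) (at t)"
    and g: "\<And>t. t \<ge> T \<Longrightarrow> \<bar>g t - L\<bar> \<le> \<eta>"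
    and t: "t \<ge> T"
  shows "\<bar>y t - L / c\<bar> \<le> exp (c * (T - t)) * \<bar>y T - L / c\<bar> + \<eta> / c"
proof -
  have \<eta>: "\<eta> \<ge> 0" using g[of T] by simp
  have g_upper: "g s \<le> L + \<eta>" and g_lower: "- g s \<le> - L + \<eta>" if "s \<ge> T" for s
    using g[OF that] by (simp_all add: abs_le_iff)
  let ?E = "exp (c * (T - t))"
  have "y t \<le> ?E * (y T - (L + \<eta>) / c) + (L + \<eta>) / c"
    by (rule ode_upper_bound[OF c der g_upper t])
  moreover have "- y t \<le> ?E * (- y T - (- L + \<eta>) / c) + (- L + \<eta>) / c"
    by (rule ode_upper_bound[where y = "\<lambda>t. - y t" and g = "\<lambda>t. - g t", OF c _ g_lower t])
       (use der in \<open>auto intro!: derivative_eq_intros\<close>)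
  moreover have "?E * (\<eta> / c) \<ge> 0" using \<eta> c by simp
  moreover have "?E * (y T - L / c) \<le> ?E * \<bar>y T - L / c\<bar>" "?E * (L / c - y T) \<le> ?E * \<bar>y T - L / c\<bar>"
    by (simp_all add: mult_left_mono)
  ultimately show ?thesis
    by (simp add: abs_le_iff add_divide_distrib diff_divide_distrib algebra_simps)
qed

lemma ode_limit:
  fixes y g :: "real \<Rightarrow> real" and c L :: real
  assumes c: "c > 0"
    and der: "\<And>t. t \<ge> 0 \<Longrightarrow> (y has_real_derivative (g t - c * y t)) (at t within {0..})"
    and lim: "(g \<longlongrightarrow> L) at_top"
  shows "(y \<longlongrightarrow> L / c) at_top"
proof (rule tendstoI)
  fix \<epsilon> :: real assume \<epsilon>: "\<epsilon> > 0"
  define \<eta> where "\<eta> = \<epsilon> * c / 2"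
  have "\<eta> > 0" using \<epsilon> c by (simp add: \<eta>_def)
  with lim obtain T0 where T0: "\<And>t. t \<ge> T0 \<Longrightarrow> \<bar>g t - L\<bar> < \<eta>"
    unfolding tendsto_iff eventually_at_top_linorder dist_real_def by blast
  define T where "T = max T0 1"
  have der_at: "(y has_real_derivative (g t - c * y t)) (at t)" if "t \<ge> T" for t
    using der[of t] that at_within_interior[of t "{0::real..}"] by (simp add: T_def)
  have g_close: "\<bar>g s - L\<bar> \<le> \<eta>" if "s \<ge> T" for s
    using T0[of s] that by (simp add: T_def)
  have "filterlim (\<lambda>t. c * (T - t)) at_bot at_top"
    using c by real_asymp
  then have "((\<lambda>t. exp (c * (T - t)) * \<bar>y T - L / c\<bar>) \<longlongrightarrow> 0 * \<bar>y T - L / c\<bar>) at_top"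
    by (intro tendsto_mult tendsto_const filterlim_compose[OF exp_at_bot])
  then have "eventually (\<lambda>t. exp (c * (T - t)) * \<bar>y T - L / c\<bar> < \<epsilon> / 2) at_top"
    using \<epsilon> by (intro order_tendstoD) auto
  then show "eventually (\<lambda>t. dist (y t) (L / c) < \<epsilon>) at_top"
    using eventually_ge_at_top[of T]
  proof eventually_elim
    case (elim t)
    have "\<bar>y t - L / c\<bar> \<le> exp (c * (T - t)) * \<bar>y T - L / c\<bar> + \<eta> / c"
      by (rule ode_deviation_bound[OF c der_at g_close elim(2)])
    then show ?case using elim(1) c by (simp add: dist_real_def \<eta>_def)
  qed
qed

lemma ode_cascade_limit:
  fixes y :: "nat \<Rightarrow> real \<Rightarrow> real" and a c L :: real
  assumes c: "c > 0"
    and lim0: "(y 0 \<longlongrightarrow> L) at_top"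
    and der: "\<And>j t. t \<ge> 0 \<Longrightarrow>
      (y (Suc j) has_real_derivative (a * y j t - c * y (Suc j) t)) (at t within {0..})"
  shows "(y j \<longlongrightarrow> L * (a / c) ^ j) at_top"
proof (induction j)
  case (Suc j)
  have "(y (Suc j) \<longlongrightarrow> a * (L * (a / c) ^ j) / c) at_top"
    by (rule ode_limit[OF c der]) (simp_all add: tendsto_mult_left Suc.IH)
  then show ?case by (simp add: field_simps)
qed (use lim0 in simp)

lemma law_evolution_config_prob:
  "law_evolution la lb d \<mu> \<Longrightarrow> t \<ge> 0 \<Longrightarrow> config_prob (\<mu> t)"
  unfolding law_evolution_def config_prob_def config_prob_axioms_def by auto

lemma law_evolution_monomial_deriv:
  assumes ev: "law_evolution la lb d \<mu>" and S: "finite S" and t: "t \<ge> 0"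
  shows "((\<lambda>s. integral\<^sup>L (\<mu> s) (monomial S)) has_real_derivative
     (la + lb * of_bool (0 \<notin> S)) * integral\<^sup>L (\<mu> t) (monomial (shift_set S))
     - (la + lb + d * card S) * integral\<^sup>L (\<mu> t) (monomial S)) (at t within {0..})"
proof -
  obtain n where "S \<subseteq> {..<n}" using S finite_nat_bounded by blast
  then have "cylinder (monomial S)"
    unfolding cylinder_iff_local using local_to_monomial by blast
  moreover have "\<forall>f. cylinder f \<longrightarrow> (\<forall>t\<ge>0. ((\<lambda>s. integral\<^sup>L (\<mu> s) f) has_real_derivative
      integral\<^sup>L (\<mu> t) (gen la lb d f)) (at t within {0..}))"
    using ev unfolding law_evolution_def by (rule conjunct2)
  ultimately have "((\<lambda>s. integral\<^sup>L (\<mu> s) (monomial S)) has_real_derivative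
      integral\<^sup>L (\<mu> t) (gen la lb d (monomial S))) (at t within {0..})"
    using t by blast
  then show ?thesis
    using config_prob.integral_gen_monomial[OF law_evolution_config_prob[OF ev t] S] by simp
qed

lemma shift_set_simps [simp]:
  "shift_set {0} = {}" "shift_set {Suc j} = {j}" "shift_set {0, Suc 0} = {0}"
  "shift_set {Suc j, Suc (Suc j)} = {j, Suc j}"
  by (auto simp: shift_set_def)

text \<open>Site \<open>0\<close> is refilled by fast arrivals at rate \<open>la\<close> and emptied at rate \<open>la + lb + d\<close>.\<close>
lemma first_site_limit:
  assumes pos: "la > 0" "lb > 0" "d > 0" and ev: "law_evolution la lb d \<mu>"
  shows "((\<lambda>t. integral\<^sup>L (\<mu> t) (monomial {0})) \<longlongrightarrow> la / (la + lb + d)) at_top"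
proof (rule ode_limit[where g = "\<lambda>_. la"])
  fix t :: real assume t: "t \<ge> 0"
  show "((\<lambda>t. integral\<^sup>L (\<mu> t) (monomial {0})) has_real_derivative
      la - (la + lb + d) * integral\<^sup>L (\<mu> t) (monomial {0})) (at t within {0..})"
    using law_evolution_monomial_deriv[OF ev _ t, of "{0}"]
      config_prob.integral_monomial_empty[OF law_evolution_config_prob[OF ev t]]
    by simp
qed (use pos in simp_all)

text \<open>Site \<open>j + 1\<close> is fed by site \<open>j\<close> at rate \<open>l\<close> and emptied at rate \<open>l + d\<close>.\<close>
lemma single_site_limit:
  assumes pos: "la > 0" "lb > 0" "d > 0" and ev: "law_evolution la lb d \<mu>"
  defines "l \<equiv> la + lb"
  shows "((\<lambda>t. integral\<^sup>L (\<mu> t) (monomial {j})) \<longlongrightarrow> la / l * (l / (l + d)) ^ Suc j) at_top"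
proof -
  have "((\<lambda>s. integral\<^sup>L (\<mu> s) (monomial {Suc k})) has_real_derivative
      l * integral\<^sup>L (\<mu> t) (monomial {k}) - (l + d) * integral\<^sup>L (\<mu> t) (monomial {Suc k}))
      (at t within {0..})" if "t \<ge> 0" for k t
    using law_evolution_monomial_deriv[OF ev _ that, of "{Suc k}"] by (simp add: l_def)
  from ode_cascade_limit[OF _ first_site_limit[OF pos ev] this]
  have "((\<lambda>t. integral\<^sup>L (\<mu> t) (monomial {j})) \<longlongrightarrow> la / (l + d) * (l / (l + d)) ^ j) at_top"
    using pos by (simp add: l_def)
  moreover have "la / (l + d) * (l / (l + d)) ^ j = la / l * (l / (l + d)) ^ Suc j"
    using pos by (simp add: l_def)
  ultimately show ?thesis by (simp only:)
qed

text \<open>The pair \<open>{0, 1}\<close> is fed by site \<open>0\<close> through fast arrivals; the pair \<open>{j + 1, j + 2}\<close> is fed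
  by the pair \<open>{j, j + 1}\<close> at rate \<open>l\<close>, and every pair is emptied at rate \<open>l + 2 d\<close>.\<close>
lemma adjacent_pair_limit:
  assumes pos: "la > 0" "lb > 0" "d > 0" and ev: "law_evolution la lb d \<mu>"
  defines "l \<equiv> la + lb"
  shows "((\<lambda>t. integral\<^sup>L (\<mu> t) (monomial {j, Suc j})) \<longlongrightarrow>
    la\<^sup>2 / (l * (l + d)) * (l / (l + 2 * d)) ^ Suc j) at_top"
proof -
  have base: "((\<lambda>t. integral\<^sup>L (\<mu> t) (monomial {0, Suc 0})) \<longlongrightarrow> la * (la / (l + d)) / (l + 2 * d)) at_top"
  proof (rule ode_limit[where g = "\<lambda>t. la * integral\<^sup>L (\<mu> t) (monomial {0})"])
    fix t :: real assume t: "t \<ge> 0"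
    show "((\<lambda>t. integral\<^sup>L (\<mu> t) (monomial {0, Suc 0})) has_real_derivative
        la * integral\<^sup>L (\<mu> t) (monomial {0}) - (l + 2 * d) * integral\<^sup>L (\<mu> t) (monomial {0, Suc 0}))
        (at t within {0..})"
      using law_evolution_monomial_deriv[OF ev _ t, of "{0, Suc 0}"] by (simp add: l_def algebra_simps)
  qed (use pos tendsto_mult_left[OF first_site_limit[OF pos ev], of la] in \<open>simp_all add: l_def\<close>)
  have step: "((\<lambda>s. integral\<^sup>L (\<mu> s) (monomial {Suc k, Suc (Suc k)})) has_real_derivative
      l * integral\<^sup>L (\<mu> t) (monomial {k, Suc k}) - (l + 2 * d) * integral\<^sup>L (\<mu> t) (monomial {Suc k, Suc (Suc k)}))
      (at t within {0..})" if "t \<ge> 0" for k t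
    using law_evolution_monomial_deriv[OF ev _ that, of "{Suc k, Suc (Suc k)}"] by (simp add: l_def algebra_simps)
  have "l > 0" using pos by (simp add: l_def)
  from ode_cascade_limit[OF _ base step]
  have "((\<lambda>t. integral\<^sup>L (\<mu> t) (monomial {j, Suc j})) \<longlongrightarrow>
      la * (la / (l + d)) / (l + 2 * d) * (l / (l + 2 * d)) ^ j) at_top"
    using \<open>l > 0\<close> pos by simp
  moreover have "la * (la / (l + d)) / (l + 2 * d) * (l / (l + 2 * d)) ^ j
      = la\<^sup>2 / (l * (l + d)) * (l / (l + 2 * d)) ^ Suc j"
    using \<open>l > 0\<close> pos by (simp add: power2_eq_square)
  ultimately show ?thesis by (simp only:)
qed

lemma marginal_limits:
  assumes pos: "la > 0" "lb > 0" "d > 0" and ev: "law_evolution la lb d \<mu>"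
  defines "l \<equiv> la + lb"
  shows "((\<lambda>t. measure (\<mu> t) {A. A j}) \<longlongrightarrow> la / l * (l / (l + d)) ^ Suc j) at_top"
    and "((\<lambda>t. measure (\<mu> t) {A. A j \<and> A (Suc j)})
          \<longlongrightarrow> la\<^sup>2 / (l * (l + d)) * (l / (l + 2 * d)) ^ Suc j) at_top"
proof -
  have "eventually (\<lambda>t. measure (\<mu> t) {A. \<forall>i\<in>S. A i} = integral\<^sup>L (\<mu> t) (monomial S)) at_top"
    if "finite S" for S
    using eventually_ge_at_top[of 0]
  proof eventually_elim
    case (elim t)
    show ?case
      by (rule config_prob.measure_eq_integral_monomial[OF law_evolution_config_prob[OF ev elim] that])
  qed
  from this[of "{j}"] this[of "{j, Suc j}"]
  show "((\<lambda>t. measure (\<mu> t) {A. A j}) \<longlongrightarrow> la / l * (l / (l + d)) ^ Suc j) at_top"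
    and "((\<lambda>t. measure (\<mu> t) {A. A j \<and> A (Suc j)})
          \<longlongrightarrow> la\<^sup>2 / (l * (l + d)) * (l / (l + 2 * d)) ^ Suc j) at_top"
    using single_site_limit[OF pos ev, of j] adjacent_pair_limit[OF pos ev, of j]
    by (simp_all add: l_def tendsto_cong)
qed

definition uniform01 :: "real measure" where
  "uniform01 = uniform_measure lborel {0..1}"

lemma sets_uniform01 [measurable_cong, simp]: "sets uniform01 = sets borel"
  by (simp add: uniform01_def)

lemma space_uniform01 [simp]: "space uniform01 = UNIV"
  by (simp add: uniform01_def)

lemma prob_space_uniform01: "prob_space uniform01"
  unfolding uniform01_def by (rule prob_space_uniform_measure) auto

lemma AE_uniform01: "AE u in uniform01. 0 \<le> u \<and> u \<le> 1"
  unfolding uniform01_def by (rule AE_uniform_measureI) auto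

lemma nn_integral_uniform01_threshold:
  assumes "0 \<le> z" "z \<le> 1" "0 \<le> w"
  shows "(\<integral>\<^sup>+v. ennreal (of_bool (v < z) * w) \<partial>uniform01) = ennreal (z * w)"
proof -
  have "(\<integral>\<^sup>+v. ennreal (of_bool (v < z) * w) \<partial>uniform01) = (\<integral>\<^sup>+v. ennreal w * indicator {..<z} v \<partial>uniform01)"
    by (intro nn_integral_cong) (auto split: split_indicator)
  also have "\<dots> = ennreal w * emeasure uniform01 {..<z}"
    by (rule nn_integral_cmult_indicator) simp
  also have "emeasure uniform01 {..<z} = emeasure lborel ({0..1} \<inter> {..<z}) / emeasure lborel {0..1::real}"
    unfolding uniform01_def by (rule emeasure_uniform_measure) auto
  also have "{0..1} \<inter> {..<z} = {0..<z}" using assms by auto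
  finally show ?thesis using assms by (simp add: ennreal_mult' mult.commute divide_ennreal_def)
qed

lemma nn_integral_uniform01_powr:
  assumes "a > 0"
  shows "(\<integral>\<^sup>+u. ennreal (u powr a) \<partial>uniform01) = ennreal (1 / (a + 1))"
proof -
  have "(\<integral>\<^sup>+u. ennreal (u powr a) \<partial>uniform01)
      = (\<integral>\<^sup>+u. ennreal (u powr a) * indicator {0..1} u \<partial>lborel) / emeasure lborel {0..1::real}"
    unfolding uniform01_def by (rule nn_integral_uniform_measure) auto
  also have "(\<integral>\<^sup>+u. ennreal (u powr a) * indicator {0..1} u \<partial>lborel)
      = (\<integral>\<^sup>+u. ennreal (if u \<in> {0..1} then u powr a else 0) \<partial>lborel)"
    by (intro nn_integral_cong) (auto split: split_indicator)
  also have "\<dots> = ennreal (1 / (a + 1))"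
  proof (rule nn_integral_has_integral_lborel)
    show "((\<lambda>u. if u \<in> {0..1} then u powr a else 0) has_integral 1 / (a + 1)) UNIV"
      unfolding has_integral_restrict_UNIV using has_integral_powr_from_0[of a 1] assms by simp
  qed auto
  finally show ?thesis by (simp add: divide_ennreal_def)
qed

definition noise :: "(real \<times> real) measure" where
  "noise = uniform01 \<Otimes>\<^sub>M uniform01"

lemma sets_noise [measurable_cong]: "sets noise = sets (borel \<Otimes>\<^sub>M borel)"
  unfolding noise_def by (intro sets_pair_measure_cong) auto

lemma prob_space_noise: "prob_space noise"
  unfolding noise_def by (intro prob_space_pair prob_space_uniform01)

text \<open>Clamping keeps the construction well defined off the null set where a uniform leaves \<open>[0, 1]\<close>.\<close>
definition clamp01 :: "real \<Rightarrow> real" where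
  "clamp01 u = min 1 (max 0 u)"

lemma borel_measurable_clamp01 [measurable]: "clamp01 \<in> borel_measurable borel"
  unfolding clamp01_def by measurable

lemma clamp01_bounds [simp]: "0 \<le> clamp01 u" "clamp01 u \<le> 1"
  by (auto simp: clamp01_def)

text \<open>Integrating out the first noise pair: with \<open>m = k + of_bool b\<close>,
  \<open>E[(b \<longrightarrow> V < x U\<^sup>r) (x U\<^sup>r)\<^sup>k] = x\<^sup>m E[U\<^sup>r\<^sup>m] = x\<^sup>m / (1 + r m)\<close>.\<close>
lemma first_noise_integral:
  fixes r x :: real and k :: nat and b :: bool
  defines "m \<equiv> k + of_bool b"
  assumes r: "r > 0" and x: "0 \<le> x" "x \<le> 1" and m: "m \<ge> 1"
  shows "(\<integral>\<^sup>+y. ennreal (of_bool (b \<longrightarrow> snd y < x * clamp01 (fst y) powr r)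
            * (x * clamp01 (fst y) powr r) ^ k) \<partial>noise)
       = ennreal (x ^ m / (1 + r * m))"
proof -
  define F where "F u v = of_bool (b \<longrightarrow> v < x * clamp01 u powr r) * (x * clamp01 u powr r) ^ k" for u v
  have inner: "(\<integral>\<^sup>+v. ennreal (F u v) \<partial>uniform01) = ennreal (x ^ m) * ennreal ((clamp01 u powr r) ^ m)" for u
  proof -
    define z where "z = x * clamp01 u powr r"
    have z: "0 \<le> z" "z \<le> 1" using x r by (auto simp: z_def intro!: mult_le_one powr_le1)
    have "(\<integral>\<^sup>+v. ennreal (F u v) \<partial>uniform01) = ennreal (z ^ m)"
    proof (cases b)
      case True
      then have "(\<integral>\<^sup>+v. ennreal (F u v) \<partial>uniform01) = (\<integral>\<^sup>+v. ennreal (of_bool (v < z) * z ^ k) \<partial>uniform01)"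
        by (simp add: F_def z_def)
      also have "\<dots> = ennreal (z * z ^ k)"
        using z by (intro nn_integral_uniform01_threshold) auto
      finally show ?thesis using True by (simp add: m_def)
    next
      case False
      then have "(\<integral>\<^sup>+v. ennreal (F u v) \<partial>uniform01) = (\<integral>\<^sup>+v. ennreal (z ^ k) \<partial>uniform01)"
        by (simp add: F_def z_def)
      also have "\<dots> = ennreal (z ^ k)"
        using prob_space.emeasure_space_1[OF prob_space_uniform01] by simp
      finally show ?thesis using False by (simp add: m_def)
    qed
    also have "z ^ m = x ^ m * (clamp01 u powr r) ^ m"
      by (simp add: z_def power_mult_distrib)
    finally show ?thesis using x by (simp add: ennreal_mult)
  qed
  have "(\<integral>\<^sup>+y. ennreal (F (fst y) (snd y)) \<partial>noise) = (\<integral>\<^sup>+u. \<integral>\<^sup>+v. ennreal (F u v) \<partial>uniform01 \<partial>uniform01)"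
    unfolding noise_def
  proof (rule sigma_finite_measure.nn_integral_fst[symmetric, where f = "\<lambda>y. ennreal (F (fst y) (snd y))", simplified])
    show "sigma_finite_measure uniform01"
      using prob_space_uniform01 prob_space_imp_sigma_finite by blast
    show "(\<lambda>y. ennreal (F (fst y) (snd y))) \<in> borel_measurable (uniform01 \<Otimes>\<^sub>M uniform01)"
      unfolding F_def by measurable
  qed
  also have "\<dots> = ennreal (x ^ m) * (\<integral>\<^sup>+u. ennreal ((clamp01 u powr r) ^ m) \<partial>uniform01)"
    unfolding inner by (rule nn_integral_cmult) measurable
  also have "(\<integral>\<^sup>+u. ennreal ((clamp01 u powr r) ^ m) \<partial>uniform01) = (\<integral>\<^sup>+u. ennreal (u powr (r * m)) \<partial>uniform01)"
    using AE_uniform01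
  proof (intro nn_integral_cong_AE, eventually_elim)
    case (elim u)
    show ?case
    proof (cases "u = 0")
      case True
      then show ?thesis using m by (simp add: clamp01_def)
    next
      case False
      then have "clamp01 u = u" using elim by (simp add: clamp01_def)
      then show ?thesis using False by (simp add: powr_power mult.commute)
    qed
  qed
  also have "\<dots> = ennreal (1 / (r * m + 1))"
    using r m by (intro nn_integral_uniform01_powr) simp
  also have "ennreal (x ^ m) * ennreal (1 / (r * m + 1)) = ennreal (x ^ m / (1 + r * m))"
    using x by (subst ennreal_mult'[symmetric]) (simp_all add: add.commute)
  finally show ?thesis by (simp add: F_def)
qed

definition noise_stream :: "(real \<times> real) stream measure" where
  "noise_stream = stream_space noise"

lemma prob_space_noise_stream: "prob_space noise_stream"
  unfolding noise_stream_def by (rule prob_space.prob_space_stream_space[OF prob_space_noise])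

text \<open>With \<open>U = e\<^sup>-\<^sup>l\<^sup>E\<close>, \<open>E\<close> exponential of rate \<open>l\<close>, the product is
  \<open>e\<^sup>-\<^sup>d\<^sup>T\<close> where \<open>T\<close> is the age of the \<open>i\<close>-th vehicle: it was fast (probability \<open>x = la / l\<close>)
  and has not yet decayed.\<close>
definition sample :: "real \<Rightarrow> real \<Rightarrow> (real \<times> real) stream \<Rightarrow> config" where
  "sample r x \<omega> i = (snd (\<omega> !! i) < x * (\<Prod>k\<le>i. clamp01 (fst (\<omega> !! k)) powr r))"

lemma measurable_sample_site [measurable]: "Measurable.pred noise_stream (\<lambda>\<omega>. sample r x \<omega> i)"
  unfolding sample_def noise_stream_def by measurable

lemma measurable_sample: "sample r x \<in> measurable noise_stream config_space"
proof -
  have "(\<lambda>\<omega> i. sample r x \<omega> i) \<in> measurable noise_stream config_space"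
    unfolding config_space_def by (rule measurable_PiM_single') (auto simp: pred_def[symmetric])
  then show ?thesis by simp
qed

lemma measurable_monomial_sample [measurable]:
  "finite S \<Longrightarrow> (\<lambda>\<omega>. monomial S (sample r x \<omega>)) \<in> borel_measurable noise_stream"
  using measurable_compose[OF measurable_sample measurable_monomial] by simp

lemma sample_Cons:
  "sample r x (y ## s) = push (snd y < x * clamp01 (fst y) powr r) (sample r (x * clamp01 (fst y) powr r) s)"
proof
  fix i
  show "sample r x (y ## s) i = push (snd y < x * clamp01 (fst y) powr r) (sample r (x * clamp01 (fst y) powr r) s) i"
    by (cases i) (simp_all add: push_def sample_def prod.atMost_Suc_shift mult.assoc del: prod.atMost_Suc)
qed

text \<open>\<open>\<Prod>\<^sub>k\<^sub><\<^sub>n 1 / (1 + r \<cdot> #{i \<in> S. k \<le> i})\<close>: the \<open>k\<close>-th noise pair contributes one factor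
  \<open>E[U\<^sup>r\<^sup>m]\<close> for each of the \<open>m\<close> sites of \<open>S\<close> at or behind position \<open>k\<close>.\<close>
definition moment_factor :: "real \<Rightarrow> nat \<Rightarrow> nat set \<Rightarrow> real" where
  "moment_factor r n S = (\<Prod>k<n. 1 / (1 + r * card {i\<in>S. k \<le> i}))"

lemma moment_factor_Suc:
  assumes "finite S"
  shows "moment_factor r (Suc n) S = 1 / (1 + r * card S) * moment_factor r n (shift_set S)"
proof -
  have "{i\<in>S. Suc k \<le> i} = Suc ` {i\<in>shift_set S. k \<le> i}" for k
    by (auto simp: shift_set_def image_iff) (metis Suc_le_D Suc_le_mono)
  then have "card {i\<in>S. Suc k \<le> i} = card {i\<in>shift_set S. k \<le> i}" for k
    by (simp add: card_image)
  then show ?thesis unfolding moment_factor_def by (subst prod.lessThan_Suc_shift) simp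
qed

lemma moment_factor_nonneg: "r \<ge> 0 \<Longrightarrow> moment_factor r n S \<ge> 0"
  unfolding moment_factor_def by (auto intro!: prod_nonneg)

lemma moment_formula:
  assumes r: "r > 0"
  shows "S \<subseteq> {..<n} \<Longrightarrow> 0 \<le> x \<Longrightarrow> x \<le> 1 \<Longrightarrow>
    (\<integral>\<^sup>+\<omega>. ennreal (monomial S (sample r x \<omega>)) \<partial>noise_stream) = ennreal (x ^ card S * moment_factor r n S)"
proof (induction n arbitrary: S x)
  case (Suc n)
  show ?case
  proof (cases "S = {}")
    case False
    define S' where "S' = shift_set S"
    define K' where "K' = moment_factor r n S'"
    define z where "z y = x * clamp01 (fst y) powr r" for y :: "real \<times> real"
    define F where "F y = of_bool (0 \<in> S \<longrightarrow> snd y < z y) * z y ^ card S'" for y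
    have fin: "finite S" "finite S'"
      using Suc.prems(1) finite_subset finite_shift_set by (auto simp: S'_def)
    have S': "S' \<subseteq> {..<n}" using Suc.prems(1) by (simp add: S'_def shift_set_subset)
    have K': "K' \<ge> 0" using r by (simp add: K'_def moment_factor_nonneg)
    have z: "0 \<le> z y" "z y \<le> 1" for y
      using Suc.prems r by (auto simp: z_def intro!: mult_le_one powr_le1)
    have card_S: "card S = card S' + of_bool (0 \<in> S)" "card S \<ge> 1"
      using card_shift_set[OF fin(1)] False fin by (auto simp: S'_def Suc_le_eq card_gt_0_iff)
    have step: "(\<integral>\<^sup>+s. ennreal (monomial S (sample r x (y ## s))) \<partial>noise_stream) = ennreal (F y) * ennreal K'" for y
    proof -
      have "(\<integral>\<^sup>+s. ennreal (monomial S (sample r x (y ## s))) \<partial>noise_stream)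
          = (\<integral>\<^sup>+s. ennreal (of_bool (0 \<in> S \<longrightarrow> snd y < z y)) * ennreal (monomial S' (sample r (z y) s)) \<partial>noise_stream)"
        by (simp add: sample_Cons monomial_push S'_def z_def ennreal_mult')
      also have "\<dots> = ennreal (of_bool (0 \<in> S \<longrightarrow> snd y < z y)) * ennreal (z y ^ card S' * K')"
        using fin(2) Suc.IH[OF S' z] by (subst nn_integral_cmult) (auto simp: K'_def)
      finally show ?thesis using z K' by (simp add: F_def ennreal_mult)
    qed
    have "(\<integral>\<^sup>+\<omega>. ennreal (monomial S (sample r x \<omega>)) \<partial>noise_stream)
        = (\<integral>\<^sup>+y. ennreal (F y) * ennreal K' \<partial>noise)"
      unfolding noise_stream_def using fin(1)
      by (subst prob_space.nn_integral_stream_space[OF prob_space_noise])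
         (simp_all add: noise_stream_def[symmetric] step)
    also have "\<dots> = (\<integral>\<^sup>+y. ennreal (F y) \<partial>noise) * ennreal K'"
      unfolding F_def z_def by (rule nn_integral_multc) measurable
    also have "(\<integral>\<^sup>+y. ennreal (F y) \<partial>noise) = ennreal (x ^ card S / (1 + r * card S))"
      unfolding F_def z_def card_S(1) using Suc.prems r card_S by (intro first_noise_integral) auto
    also have "ennreal (x ^ card S / (1 + r * card S)) * ennreal K'
        = ennreal (x ^ card S / (1 + r * card S) * K')"
      using Suc.prems r by (intro ennreal_mult'[symmetric]) simp
    also have "x ^ card S / (1 + r * card S) * K' = x ^ card S * moment_factor r (Suc n) S"
      using moment_factor_Suc[OF fin(1), of r n] by (simp add: K'_def S'_def)
    finally show ?thesis .
  qed (use prob_space.emeasure_space_1[OF prob_space_noise_stream] in \<open>simp add: monomial_def moment_factor_def\<close>)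
qed (use prob_space.emeasure_space_1[OF prob_space_noise_stream] in \<open>simp add: monomial_def moment_factor_def\<close>)

definition stationary_law :: "real \<Rightarrow> real \<Rightarrow> real \<Rightarrow> config measure" where
  "stationary_law la lb d = distr noise_stream config_space (sample (d / (la + lb)) (la / (la + lb)))"

lemma config_prob_stationary_law: "config_prob (stationary_law la lb d)"
  unfolding config_prob_def config_prob_axioms_def stationary_law_def
  by (auto intro!: prob_space.prob_space_distr[OF prob_space_noise_stream] measurable_sample)

lemma integral_monomial_stationary_law:
  assumes pos: "la > 0" "lb > 0" "d > 0" and S: "S \<subseteq> {..<n}"
  shows "integral\<^sup>L (stationary_law la lb d) (monomial S)
    = (la / (la + lb)) ^ card S * moment_factor (d / (la + lb)) n S"
proof -
  have fin: "finite S" using S finite_subset by blast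
  have "integral\<^sup>L (stationary_law la lb d) (monomial S)
      = enn2real (\<integral>\<^sup>+A. ennreal (monomial S A) \<partial>stationary_law la lb d)"
    using fin by (intro integral_eq_nn_integral) (auto simp: stationary_law_def monomial_def)
  also have "(\<integral>\<^sup>+A. ennreal (monomial S A) \<partial>stationary_law la lb d)
      = (\<integral>\<^sup>+\<omega>. ennreal (monomial S (sample (d / (la + lb)) (la / (la + lb)) \<omega>)) \<partial>noise_stream)"
    unfolding stationary_law_def using fin by (subst nn_integral_distr[OF measurable_sample]) auto
  also have "\<dots> = ennreal ((la / (la + lb)) ^ card S * moment_factor (d / (la + lb)) n S)"
    using pos S by (intro moment_formula) auto
  finally show ?thesis using pos by (simp add: moment_factor_nonneg)
qed

lemma integral_gen_monomial_stationary_law: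
  assumes pos: "la > 0" "lb > 0" "d > 0" and fin: "finite S"
  shows "integral\<^sup>L (stationary_law la lb d) (gen la lb d (monomial S)) = 0"
proof -
  obtain n where S: "S \<subseteq> {..<n}" using fin finite_nat_bounded by blast
  define l where "l = la + lb"
  define K where "K = moment_factor (d / l) n (shift_set S)"
  define m' where "m' = card (shift_set S)"
  have l: "l > 0" using pos by (simp add: l_def)
  have S_Suc: "S \<subseteq> {..<Suc n}" using S by auto
  have card_S: "card S = m' + of_bool (0 \<in> S)"
    using card_shift_set[OF fin] by (simp add: m'_def)
  have "l + d * card S > 0" using l pos by (simp add: add_pos_nonneg)
  then have "(l + d * card S) * (1 / (1 + d / l * card S)) = l"
    using l by (simp add: field_simps)
  moreover have "integral\<^sup>L (stationary_law la lb d) (monomial S)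
      = (1 / (1 + d / l * card S)) * ((la / l) ^ card S * K)"
    using integral_monomial_stationary_law[OF pos S_Suc] moment_factor_Suc[OF fin]
    by (simp add: l_def K_def)
  ultimately have S_moment: "(l + d * card S) * integral\<^sup>L (stationary_law la lb d) (monomial S)
      = l * ((la / l) ^ card S * K)"
    by (metis mult.assoc)
  have shifted_moment: "integral\<^sup>L (stationary_law la lb d) (monomial (shift_set S)) = (la / l) ^ m' * K"
    using integral_monomial_stationary_law[OF pos shift_set_subset[OF S_Suc]]
    by (simp add: l_def K_def m'_def)
  have "integral\<^sup>L (stationary_law la lb d) (gen la lb d (monomial S))
      = (la + lb * of_bool (0 \<notin> S)) * ((la / l) ^ m' * K) - l * ((la / l) ^ card S * K)"
    using config_prob.integral_gen_monomial[OF config_prob_stationary_law fin] S_moment shifted_moment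
    by (simp add: l_def)
  also have "\<dots> = 0"
    using l by (cases "0 \<in> S") (simp_all add: card_S l_def)
  finally show ?thesis .
qed

lemma integral_trunc_gen_stationary_law:
  assumes pos: "la > 0" "lb > 0" "d > 0"
  shows "f \<in> monomial_span n \<Longrightarrow> integrable (stationary_law la lb d) (trunc_gen la lb d n f)
    \<and> integral\<^sup>L (stationary_law la lb d) (trunc_gen la lb d n f) = 0"
proof (induction rule: monomial_span.induct)
  case (monomial S)
  interpret config_prob "stationary_law la lb d" by (rule config_prob_stationary_law)
  have fin: "finite S" "finite (shift_set S)"
    using monomial finite_subset finite_shift_set by auto
  have "trunc_gen la lb d n (monomial S) = (\<lambda>A. (la + lb * of_bool (0 \<notin> S)) * monomial (shift_set S) A
      - (la + lb + d * card S) * monomial S A)"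
    using trunc_gen_monomial[OF monomial] by auto
  moreover have "trunc_gen la lb d n (monomial S) = gen la lb d (monomial S)"
    using gen_eq_trunc_gen[OF local_to_monomial[OF monomial]] by auto
  ultimately show ?case
    using integral_gen_monomial_stationary_law[OF pos fin(1)] fin by auto
next
  case (add f g)
  have "trunc_gen la lb d n (\<lambda>A. f A + g A) = (\<lambda>A. trunc_gen la lb d n f A + trunc_gen la lb d n g A)"
    by (simp add: fun_eq_iff trunc_gen_add)
  then show ?case using add.IH by simp
next
  case (scale f c)
  have "trunc_gen la lb d n (\<lambda>A. c * f A) = (\<lambda>A. c * trunc_gen la lb d n f A)"
    by (simp add: fun_eq_iff trunc_gen_scale)
  then show ?case using scale.IH by simp
qed

theorem stationary_law_is_stationary:
  assumes pos: "la > 0" "lb > 0" "d > 0"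
  shows "stationary la lb d (stationary_law la lb d)"
  unfolding stationary_def law_evolution_def
proof (intro conjI allI impI)
  interpret config_prob "stationary_law la lb d" by (rule config_prob_stationary_law)
  show "prob_space (stationary_law la lb d)" "sets (stationary_law la lb d) = sets config_space"
    by (rule prob_space_axioms) (rule sets_config)
next
  fix f :: "config \<Rightarrow> real" and t :: real
  assume "cylinder f"
  then obtain n where f: "local_to n f" by (auto simp: cylinder_iff_local)
  have "gen la lb d f = trunc_gen la lb d n f"
    using gen_eq_trunc_gen[OF f] by auto
  then have "integral\<^sup>L (stationary_law la lb d) (gen la lb d f) = 0"
    using integral_trunc_gen_stationary_law[OF pos local_in_monomial_span[OF f]] by simp
  then show "((\<lambda>s. integral\<^sup>L (stationary_law la lb d) f) has_real_derivative
      integral\<^sup>L (stationary_law la lb d) (gen la lb d f)) (at t within {0..})"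
    by simp
qed

theorem mainTheorem8:
  fixes la lb d :: real
  assumes "la > 0" and "lb > 0" and "d > 0"
  defines "l \<equiv> la + lb"
  shows "(\<exists>\<mu>. stationary la lb d \<mu> \<and>
            (\<forall>i::nat. i \<ge> 1 \<longrightarrow>
               measure \<mu> {A. A (i - 1)} = la / l * (l / (l + d)) ^ i \<and>
               measure \<mu> {A. A (i - 1) \<and> A i} = la\<^sup>2 / (l * (l + d)) * (l / (l + 2 * d)) ^ i))
       \<and> (\<forall>\<mu>. law_evolution la lb d \<mu> \<longrightarrow>
            (\<forall>i::nat. i \<ge> 1 \<longrightarrow>
               ((\<lambda>t. measure (\<mu> t) {A. A (i - 1)}) \<longlongrightarrow> la / l * (l / (l + d)) ^ i) at_top \<and>
               ((\<lambda>t. measure (\<mu> t) {A. A (i - 1) \<and> A i})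
                   \<longlongrightarrow> la\<^sup>2 / (l * (l + d)) * (l / (l + 2 * d)) ^ i) at_top))"
proof -
  note pos = assms(1-3)
  have limits: "((\<lambda>t. measure (\<mu> t) {A. A (i - 1)}) \<longlongrightarrow> la / l * (l / (l + d)) ^ i) at_top \<and>
      ((\<lambda>t. measure (\<mu> t) {A. A (i - 1) \<and> A i})
         \<longlongrightarrow> la\<^sup>2 / (l * (l + d)) * (l / (l + 2 * d)) ^ i) at_top"
    if "law_evolution la lb d \<mu>" "i \<ge> 1" for \<mu> i
    using marginal_limits[OF pos that(1), of "i - 1"] that(2) by (simp add: l_def)
  text \<open>The stationary law is a constant law evolution, so its marginals equal their limits.\<close>
  define \<mu> where "\<mu> = stationary_law la lb d"
  have "stationary la lb d \<mu>" by (simp add: \<mu>_def stationary_law_is_stationary[OF pos])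
  moreover have "law_evolution la lb d (\<lambda>_. \<mu>)"
    using calculation by (simp add: stationary_def)
  ultimately show ?thesis
    using limits limits[where \<mu> = "\<lambda>_. \<mu>"] by (auto simp: tendsto_const_iff)
qed

end
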